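(* Let $S$ be a closed densely defined symmetric operator in a separable Hilbert space $\mathfrak H$ with equal nonzero defect numbers. Then $S$ is a Phillips symmetric operator if and only if $$\mathfrak N_\lambda\subset \mathcal D(S)\dotplus \mathfrak N_\mu\quad\text{for all }\lambda,\mu\in\mathbb C_+ .$$
   Context: $\mathbb C_\pm$ denote the open upper/lower half planes. For a closed densely defined symmetric operator $S$ in $\mathfrak H$, $\mathfrak N_\lambda=\ker(S^*-\lambda I)$, $\lambda\in\mathbb C\setminus\mathbb R$, are its defect subspaces, and its defect numbers are $\langle\dim\mathfrak N_i,\dim\mathfrak N_{-i}\rangle$; $\dotplus$ denotes a (non-orthogonal) direct sum. A boundary triplet of $S^*$ is $(\mathcal H,\Gamma_-,\Gamma_+)$, where $\mathcal H$ is a Hilbert space and $\Gamma_\pm:\mathcal D(S^* )\to\mathcal H$ are linear maps with $(S^*f,g)-(f,S^*g)=i[(\Gamma_+f,\Gamma_+g)_{\mathcal H}-(\Gamma_-f,\Gamma_-g)_{\mathcal H}]$ for all $f,g\in\mathcal D(S^* )$ and $(\Gamma_-,\Gamma_+):\mathcal D(S^* )\to\mathcal H\oplus\mathcal H$ surjective. For $\lambda\in\mathbb C_+$ let $A_\lambda=S^*\upharpoonright_{\mathcal D(S)\dotplus\mathfrak N_\lambda}$; there is a bounded operator $\Theta(\lambda)$ in $\mathcal H$ such that $\mathcal D(A_\lambda)=\{f\in\mathcal D(S^* ):\Theta(\lambda)\Gamma_+f=\Gamma_-f\}$; $\Theta(\cdot)$ is called the characteristic function of $S$ associated with the triplet.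 A closed densely defined symmetric operator with equal nonzero defect numbers is called a Phillips symmetric operator (PSO) if its characteristic function is constant on $\mathbb C_+$ (this property does not depend on the choice of boundary triplet). *)

theory Defs
  imports "HOL-Analysis.Analysis"
begin

text \<open>HOL-Analysis only provides real inner product spaces, so we introduce complex
Hilbert spaces as a type class: a real Banach space with a compatible complex scalar
multiplication and a complex inner product (linear in the first argument) inducing the norm.\<close>

class chilbert = banach +
  fixes scaleC :: "complex \<Rightarrow> 'a \<Rightarrow> 'a"
    and cinner :: "'a \<Rightarrow> 'a \<Rightarrow> complex"
  assumes scaleC_of_real: "scaleC (complex_of_real r) x = scaleR r x"
    and scaleC_add_right: "scaleC a (x + y) = scaleC a x + scaleC a y"
    and scaleC_add_left: "scaleC (a + b) x = scaleC a x + scaleC b x"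
    and scaleC_mult: "scaleC (a * b) x = scaleC a (scaleC b x)"
    and scaleC_one: "scaleC 1 x = x"
    and cinner_commute: "cinner x y = cnj (cinner y x)"
    and cinner_add_left: "cinner (x + y) z = cinner x z + cinner y z"
    and cinner_scaleC_left: "cinner (scaleC a x) y = a * cinner x y"
    and cinner_self_real: "Im (cinner x x) = 0"
    and norm_eq_sqrt_cinner: "norm x = sqrt (Re (cinner x x))"

definition csubspace :: "'a::chilbert set \<Rightarrow> bool" where
  "csubspace V \<longleftrightarrow> 0 \<in> V \<and> (\<forall>x\<in>V. \<forall>y\<in>V. x + y \<in> V) \<and> (\<forall>a. \<forall>x\<in>V. scaleC a x \<in> V)"

definition cspan :: "'a::chilbert set \<Rightarrow> 'a set" where
  "cspan B = {x. \<exists>F c. finite F \<and> F \<subseteq> B \<and> x = (\<Sum>b\<in>F. scaleC (c b) b)}"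

definition orthonormal_basis_of :: "'a::chilbert set \<Rightarrow> 'a set \<Rightarrow> bool" where
  "orthonormal_basis_of B V \<longleftrightarrow> B \<subseteq> V \<and> (\<forall>b\<in>B. cinner b b = 1)
     \<and> (\<forall>b\<in>B. \<forall>b'\<in>B. b \<noteq> b' \<longrightarrow> cinner b b' = 0) \<and> closure (cspan B) = V"

definition same_hilbert_dim :: "'a::chilbert set \<Rightarrow> 'a set \<Rightarrow> bool" where
  "same_hilbert_dim V W \<longleftrightarrow> (\<exists>B1 B2 g. orthonormal_basis_of B1 V \<and> orthonormal_basis_of B2 W
      \<and> bij_betw g B1 B2)"

definition separable_space :: "'a::chilbert itself \<Rightarrow> bool" where
  "separable_space _ \<longleftrightarrow> (\<exists>C::'a set. countable C \<and> closure C = UNIV)"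

text \<open>An operator is a pair (domain, action); the action outside the domain is irrelevant.\<close>
type_synonym 'a op = "'a set \<times> ('a \<Rightarrow> 'a)"

definition linear_op :: "'a::chilbert op \<Rightarrow> bool" where
  "linear_op S \<longleftrightarrow> csubspace (fst S) \<and>
     (\<forall>x\<in>fst S. \<forall>y\<in>fst S. snd S (x + y) = snd S x + snd S y) \<and>
     (\<forall>a. \<forall>x\<in>fst S. snd S (scaleC a x) = scaleC a (snd S x))"

definition densely_defined :: "'a::chilbert op \<Rightarrow> bool" where
  "densely_defined S \<longleftrightarrow> closure (fst S) = UNIV"

definition closed_op :: "'a::chilbert op \<Rightarrow> bool" where
  "closed_op S \<longleftrightarrow> closed {(f, snd S f) | f. f \<in> fst S}"

definition symmetric_op :: "'a::chilbert op \<Rightarrow> bool" where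
  "symmetric_op S \<longleftrightarrow> (\<forall>f\<in>fst S. \<forall>g\<in>fst S. cinner (snd S f) g = cinner f (snd S g))"

text \<open>The adjoint \<open>S\<^sup>*\<close> (well defined for densely defined \<open>S\<close>).\<close>
definition adj_dom :: "'a::chilbert op \<Rightarrow> 'a set" where
  "adj_dom S = {g. \<exists>h. \<forall>f\<in>fst S. cinner (snd S f) g = cinner f h}"

definition adj_fun :: "'a::chilbert op \<Rightarrow> 'a \<Rightarrow> 'a" where
  "adj_fun S g = (THE h. \<forall>f\<in>fst S. cinner (snd S f) g = cinner f h)"

definition defect_space :: "'a::chilbert op \<Rightarrow> complex \<Rightarrow> 'a set" where
  "defect_space S l = {g \<in> adj_dom S. adj_fun S g = scaleC l g}"

definition equal_nonzero_defect_numbers :: "'a::chilbert op \<Rightarrow> bool" where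
  "equal_nonzero_defect_numbers S \<longleftrightarrow>
     same_hilbert_dim (defect_space S \<i>) (defect_space S (- \<i>)) \<and> defect_space S \<i> \<noteq> {0}"

text \<open>The set \<open>\<D>(S) \<dotplus> \<frak>N\<^sub>\<lambda>\<close> (the sum is automatically direct for nonreal \<open>\<lambda>\<close>).\<close>
definition dom_plus_defect :: "'a::chilbert op \<Rightarrow> complex \<Rightarrow> 'a set" where
  "dom_plus_defect S l = {f + g | f g. f \<in> fst S \<and> g \<in> defect_space S l}"

text \<open>The boundary Hilbert space \<open>\<H>\<close> is
realised as a closed subspace \<open>Hb\<close> of the ambient space (every Hilbert space of dimension
at most that of the ambient space is isometric to such a subspace; the boundary space
of any triplet has the dimension of \<open>\<frak>N\<^sub>i\<close>).\<close>
definition boundary_triplet :: "'a::chilbert op \<Rightarrow> 'a set \<Rightarrow> ('a \<Rightarrow> 'a) \<Rightarrow> ('a \<Rightarrow> 'a) \<Rightarrow> bool" where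
  "boundary_triplet S Hb Gm Gp \<longleftrightarrow>
     csubspace Hb \<and> closed Hb \<and>
     (\<forall>f\<in>adj_dom S. Gm f \<in> Hb \<and> Gp f \<in> Hb) \<and>
     (\<forall>f\<in>adj_dom S. \<forall>g\<in>adj_dom S. Gm (f + g) = Gm f + Gm g \<and> Gp (f + g) = Gp f + Gp g) \<and>
     (\<forall>a. \<forall>f\<in>adj_dom S. Gm (scaleC a f) = scaleC a (Gm f) \<and> Gp (scaleC a f) = scaleC a (Gp f)) \<and>
     (\<forall>f\<in>adj_dom S. \<forall>g\<in>adj_dom S.
        cinner (adj_fun S f) g - cinner f (adj_fun S g)
          = \<i> * (cinner (Gp f) (Gp g) - cinner (Gm f) (Gm g))) \<and>
     (\<forall>h1\<in>Hb. \<forall>h2\<in>Hb. \<exists>f\<in>adj_dom S. Gm f = h1 \<and> Gp f = h2)"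

definition bounded_op_on :: "'a::chilbert set \<Rightarrow> ('a \<Rightarrow> 'a) \<Rightarrow> bool" where
  "bounded_op_on Hb \<Theta> \<longleftrightarrow> (\<forall>h\<in>Hb. \<Theta> h \<in> Hb) \<and>
     (\<forall>x\<in>Hb. \<forall>y\<in>Hb. \<Theta> (x + y) = \<Theta> x + \<Theta> y) \<and>
     (\<forall>a. \<forall>x\<in>Hb. \<Theta> (scaleC a x) = scaleC a (\<Theta> x)) \<and>
     (\<exists>K. \<forall>h\<in>Hb. norm (\<Theta> h) \<le> K * norm h)"

text \<open>\<open>\<Theta>\<close> is the value of the characteristic function at \<open>\<lambda>\<close> w.r.t. the triplet.\<close>
definition is_char_fun_value :: "'a::chilbert op \<Rightarrow> 'a set \<Rightarrow> ('a \<Rightarrow> 'a) \<Rightarrow> ('a \<Rightarrow> 'a)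
    \<Rightarrow> complex \<Rightarrow> ('a \<Rightarrow> 'a) \<Rightarrow> bool" where
  "is_char_fun_value S Hb Gm Gp l \<Theta> \<longleftrightarrow> bounded_op_on Hb \<Theta> \<and>
     dom_plus_defect S l = {f \<in> adj_dom S. \<Theta> (Gp f) = Gm f}"

definition phillips_symmetric :: "'a::chilbert op \<Rightarrow> bool" where
  "phillips_symmetric S \<longleftrightarrow> linear_op S \<and> closed_op S \<and> densely_defined S \<and> symmetric_op S \<and>
     equal_nonzero_defect_numbers S \<and>
     (\<exists>Hb Gm Gp. boundary_triplet S Hb Gm Gp \<and>
        (\<exists>\<Theta>. \<forall>l. Im l > 0 \<longrightarrow> is_char_fun_value S Hb Gm Gp l \<Theta>))"

end

theory Submission
  imports Defs
begin

text \<open>If the characteristic function \<open>\<Theta>\<close> is constant, then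
  \<open>\<D>(S) \<dotplus> \<frak>N\<^sub>\<lambda> = {f. \<Theta> \<Gamma>\<^sub>+ f = \<Gamma>\<^sub>- f}\<close> does not depend on \<open>\<lambda> \<in> \<complex>\<^sub>+\<close>, which gives the
  inclusions. Conversely, the inclusions make \<open>\<D>(S) \<dotplus> \<frak>N\<^sub>\<lambda>\<close> independent of \<open>\<lambda>\<close>. By von
  Neumann's formula \<open>\<D>(S\<^sup>*) = \<D>(S) \<dotplus> \<frak>N\<^sub>i \<dotplus> \<frak>N\<^sub>-\<^sub>i\<close> and a unitary
  \<open>U : \<frak>N\<^sub>-\<^sub>i \<rightarrow> \<frak>N\<^sub>i\<close> (the defect numbers are equal), \<open>\<Gamma>\<^sub>+ f = \<surd>2 f\<^sub>i\<close>,
  \<open>\<Gamma>\<^sub>- f = \<surd>2 U f\<^sub>-\<^sub>i\<close> is a boundary triplet with \<open>\<D>(S) \<dotplus> \<frak>N\<^sub>i = ker \<Gamma>\<^sub>-\<close>, i.e.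
  \<open>\<Theta>(i) = 0\<close>; hence \<open>\<Theta> \<equiv> 0\<close>.\<close>

section \<open>Complex inner product spaces\<close>

lemma scaleC_zero_left [simp]: "scaleC 0 (x::'a::chilbert) = 0"
  using scaleC_of_real[of 0 x] by simp

lemma scaleC_zero_right [simp]: "scaleC a (0::'a::chilbert) = 0"
  using scaleC_add_right[of a 0 0] by simp

lemma scaleC_minus_right: "scaleC a (- (x::'a::chilbert)) = - scaleC a x"
  using scaleC_add_right[of a x "-x"] by (simp add: eq_neg_iff_add_eq_0 add.commute)

lemma scaleC_diff_right: "scaleC a ((x::'a::chilbert) - y) = scaleC a x - scaleC a y"
  using scaleC_add_right[of a x "-y"] by (simp add: scaleC_minus_right)

lemma scaleC_minus_left: "scaleC (- a) (x::'a::chilbert) = - scaleC a x"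
  using scaleC_add_left[of a "-a" x] by (simp add: eq_neg_iff_add_eq_0 add.commute)

lemma scaleC_scaleR: "scaleC a (scaleR r (x::'a::chilbert)) = scaleR r (scaleC a x)"
  by (simp only: scaleC_of_real[symmetric] scaleC_mult[symmetric]) (simp only: mult.commute)

lemma scaleC_sum_right: "scaleC a (sum f A) = (\<Sum>x\<in>A. scaleC a (f x :: 'a::chilbert))"
  by (induction A rule: infinite_finite_induct) (auto simp: scaleC_add_right)

lemma cinner_add_right: "cinner (x::'a::chilbert) (y + z) = cinner x y + cinner x z"
  by (metis cinner_add_left cinner_commute complex_cnj_add)

lemma cinner_scaleC_right: "cinner (x::'a::chilbert) (scaleC a y) = cnj a * cinner x y"
  by (metis cinner_commute cinner_scaleC_left complex_cnj_mult)

lemma cinner_zero_left [simp]: "cinner 0 (x::'a::chilbert) = 0"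
  using cinner_add_left[of 0 0 x] by simp

lemma cinner_zero_right [simp]: "cinner (x::'a::chilbert) 0 = 0"
  using cinner_add_right[of x 0 0] by simp

lemma cinner_minus_left: "cinner (- x) (y::'a::chilbert) = - cinner x y"
  using cinner_add_left[of x "-x" y] by (simp add: eq_neg_iff_add_eq_0 add.commute)

lemma cinner_minus_right: "cinner x (- (y::'a::chilbert)) = - cinner x y"
  using cinner_add_right[of x y "-y"] by (simp add: eq_neg_iff_add_eq_0 add.commute)

lemma cinner_diff_left: "cinner (x - z) (y::'a::chilbert) = cinner x y - cinner z y"
  using cinner_add_left[of x "-z" y] by (simp add: cinner_minus_left)

lemma cinner_diff_right: "cinner x (y - (z::'a::chilbert)) = cinner x y - cinner x z"
  using cinner_add_right[of x y "-z"] by (simp add: cinner_minus_right)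

lemma cinner_sum_left: "cinner (sum f A) (y::'a::chilbert) = (\<Sum>x\<in>A. cinner (f x) y)"
  by (induction A rule: infinite_finite_induct) (auto simp: cinner_add_left)

lemma cinner_sum_right: "cinner y (sum f A) = (\<Sum>x\<in>A. cinner (y::'a::chilbert) (f x))"
  by (induction A rule: infinite_finite_induct) (auto simp: cinner_add_right)

lemmas cinner_simps = cinner_add_left cinner_add_right cinner_diff_left cinner_diff_right
  cinner_scaleC_left cinner_scaleC_right

lemma Re_cinner_self: "Re (cinner x (x::'a::chilbert)) = (norm x)\<^sup>2"
proof -
  have "Re (cinner x x) \<ge> 0"
    using norm_ge_zero[of x] by (simp only: norm_eq_sqrt_cinner[of x] real_sqrt_ge_0_iff)
  then show ?thesis using norm_eq_sqrt_cinner[of x] by simp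
qed

lemma cinner_self: "cinner x (x::'a::chilbert) = complex_of_real ((norm x)\<^sup>2)"
  by (simp add: complex_eq_iff Re_cinner_self cinner_self_real)

lemma cinner_self_eq_0 [simp]: "cinner x (x::'a::chilbert) = 0 \<longleftrightarrow> x = 0"
  by (simp add: cinner_self)

lemma norm_eq_if_cinner_self_eq:
  assumes "cinner x x = cinner y (y::'a::chilbert)"
  shows "norm x = norm y"
  using arg_cong[where f=Re, OF assms] by (simp add: Re_cinner_self power2_eq_iff_nonneg)

lemma norm_scaleC: "norm (scaleC a (x::'a::chilbert)) = cmod a * norm x"
proof -
  have "cinner (scaleC a x) (scaleC a x) = (a * cnj a) * cinner x x"
    by (simp add: cinner_scaleC_left cinner_scaleC_right)
  also have "\<dots> = complex_of_real ((cmod a * norm x)\<^sup>2)"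
    by (simp only: complex_norm_square[symmetric] cinner_self of_real_mult power_mult_distrib)
  finally have "(norm (scaleC a x))\<^sup>2 = (cmod a * norm x)\<^sup>2"
    by (simp only: cinner_self of_real_eq_iff)
  then show ?thesis
    by (simp add: power2_eq_iff_nonneg)
qed

lemma norm_diff_scaleC_square:
  "(norm (z - scaleC t w))\<^sup>2
     = (norm z)\<^sup>2 - 2 * Re (cnj t * cinner z (w::'a::chilbert)) + (cmod t)\<^sup>2 * (norm w)\<^sup>2"
proof -
  have "cinner (z - scaleC t w) (z - scaleC t w)
      = cinner z z - (cnj t * cinner z w + cnj (cnj t * cinner z w)) + (t * cnj t) * cinner w w"
    by (simp add: cinner_simps algebra_simps cinner_commute[of w z])
  then have "Re (cinner (z - scaleC t w) (z - scaleC t w))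
      = Re (cinner z z) - 2 * Re (cnj t * cinner z w) + Re ((t * cnj t) * cinner w w)"
    by simp
  then show ?thesis
    by (simp add: Re_cinner_self cinner_self flip: complex_norm_square of_real_mult)
qed

lemma cmod_cinner_le: "cmod (cinner x y) \<le> norm x * norm (y::'a::chilbert)"
proof (cases "y = 0")
  case False
  define t where "t = cinner x y / complex_of_real ((norm y)\<^sup>2)"
  have ny: "(norm y)\<^sup>2 > 0" using False by simp
  have "Re (cnj t * cinner x y) = (cmod (cinner x y))\<^sup>2 / (norm y)\<^sup>2"
    by (simp add: t_def mult.commute[of _ "cinner x y"] flip: of_real_power complex_norm_square)
  moreover have "(cmod t)\<^sup>2 * (norm y)\<^sup>2 = (cmod (cinner x y))\<^sup>2 / (norm y)\<^sup>2"
    using ny by (simp add: t_def norm_divide power_divide norm_power field_simps del: of_real_power)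
  ultimately have "0 \<le> (norm x)\<^sup>2 - (cmod (cinner x y))\<^sup>2 / (norm y)\<^sup>2"
    using norm_diff_scaleC_square[of x t y] zero_le_power2[of "norm (x - scaleC t y)"] by simp
  then have "(cmod (cinner x y))\<^sup>2 \<le> (norm x * norm y)\<^sup>2"
    using ny by (simp add: field_simps power_mult_distrib)
  then show ?thesis by (rule power2_le_imp_le) simp
qed simp

lemma bounded_bilinear_cinner: "bounded_bilinear (cinner :: 'a::chilbert \<Rightarrow> 'a \<Rightarrow> complex)"
proof
  fix a a' b b' :: 'a and r :: real
  show "cinner (a + a') b = cinner a b + cinner a' b" by (rule cinner_add_left)
  show "cinner a (b + b') = cinner a b + cinner a b'" by (rule cinner_add_right)
  show "cinner (r *\<^sub>R a) b = r *\<^sub>R cinner a b"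
    by (simp add: scaleC_of_real[symmetric] cinner_scaleC_left scaleR_conv_of_real)
  show "cinner a (r *\<^sub>R b) = r *\<^sub>R cinner a b"
    by (simp add: scaleC_of_real[symmetric] cinner_scaleC_right scaleR_conv_of_real)
  show "\<exists>K. \<forall>a b. norm (cinner a b) \<le> norm (a::'a) * norm (b::'a) * K"
    by (rule exI[of _ 1]) (simp add: cmod_cinner_le)
qed

lemmas continuous_on_cinner [continuous_intros] =
  bounded_bilinear.continuous_on[OF bounded_bilinear_cinner]

lemma bounded_linear_scaleC: "bounded_linear (scaleC a :: 'a::chilbert \<Rightarrow> 'a)"
proof
  fix x y :: 'a and r :: real
  show "scaleC a (x + y) = scaleC a x + scaleC a y" by (rule scaleC_add_right)
  show "scaleC a (r *\<^sub>R x) = r *\<^sub>R scaleC a x" by (rule scaleC_scaleR)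
  show "\<exists>K. \<forall>x. norm (scaleC a (x::'a)) \<le> norm x * K"
    by (rule exI[of _ "cmod a"]) (simp add: norm_scaleC)
qed

lemmas tendsto_scaleC [tendsto_intros] = bounded_linear.tendsto[OF bounded_linear_scaleC]

lemma closed_orthogonal_complement: "closed {y::'a::chilbert. \<forall>x\<in>A. cinner x y = 0}"
proof -
  have "{y::'a. \<forall>x\<in>A. cinner x y = 0} = (\<Inter>x\<in>A. {y. cinner x y = 0})" by auto
  moreover have "closed {y. cinner x y = (0::complex)}" for x :: 'a
    by (intro closed_Collect_eq continuous_intros)
  ultimately show ?thesis by (simp add: closed_INT)
qed

lemma parallelogram_law_cinner:
  "(norm (x + y))\<^sup>2 + (norm (x - y))\<^sup>2 = 2 * (norm x)\<^sup>2 + 2 * (norm (y::'a::chilbert))\<^sup>2"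
proof -
  have "cinner (x + y) (x + y) + cinner (x - y) (x - y) = 2 * cinner x x + 2 * cinner y y"
    by (simp add: cinner_simps)
  from arg_cong[where f=Re, OF this] show ?thesis
    by (simp add: Re_cinner_self)
qed

lemma cinner_scaleC_sqrt2:
  "cinner (scaleC (complex_of_real (sqrt 2)) x) (scaleC (complex_of_real (sqrt 2)) y)
    = 2 * cinner x (y::'a::chilbert)"
  by (simp add: cinner_scaleC_left cinner_scaleC_right mult.assoc[symmetric] flip: of_real_mult)

section \<open>Subspaces and the projection theorem\<close>

lemma csubspace_0: "csubspace V \<Longrightarrow> 0 \<in> V"
  by (simp add: csubspace_def)

lemma csubspace_add: "csubspace V \<Longrightarrow> x \<in> V \<Longrightarrow> y \<in> V \<Longrightarrow> x + y \<in> V"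
  by (simp add: csubspace_def)

lemma csubspace_scaleC: "csubspace V \<Longrightarrow> x \<in> V \<Longrightarrow> scaleC a x \<in> V"
  by (simp add: csubspace_def)

lemma csubspace_scaleR: "csubspace V \<Longrightarrow> x \<in> V \<Longrightarrow> scaleR r x \<in> V"
  by (simp add: csubspace_def flip: scaleC_of_real)

lemma csubspace_diff: "csubspace V \<Longrightarrow> x \<in> V \<Longrightarrow> y \<in> V \<Longrightarrow> x - y \<in> V"
  using csubspace_add[of V x "-y"] csubspace_scaleR[of V y "-1"] by simp

lemma csubspace_sum: "csubspace V \<Longrightarrow> (\<And>x. x \<in> A \<Longrightarrow> f x \<in> V) \<Longrightarrow> sum f A \<in> V"
  by (induction A rule: infinite_finite_induct) (auto simp: csubspace_0 csubspace_add)

lemma csubspace_imp_convex: "csubspace V \<Longrightarrow> convex V"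
  by (auto simp: convex_def csubspace_add csubspace_scaleR)

lemma csubspace_orthogonal_complement: "csubspace {y::'a::chilbert. \<forall>x\<in>X. cinner x y = 0}"
  unfolding csubspace_def by (simp add: cinner_add_right cinner_scaleC_right)

lemma Cauchy_minimizing_sequence:
  fixes y :: "'a::chilbert"
  assumes "convex M" and s: "\<And>n. s n \<in> M" and lower: "\<And>w. w \<in> M \<Longrightarrow> d \<le> norm (y - w)"
    and lim: "(\<lambda>n. norm (y - s n)) \<longlonglongrightarrow> d"
  shows "Cauchy s"
proof (rule CauchyI)
  fix e :: real assume "e > 0"
  have "d \<ge> 0" using LIMSEQ_le_const[OF lim] by simp
  have "(\<lambda>n. (norm (y - s n))\<^sup>2) \<longlonglongrightarrow> d\<^sup>2" by (intro tendsto_intros lim)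
  moreover have "d\<^sup>2 < d\<^sup>2 + e\<^sup>2 / 4" using \<open>e > 0\<close> by simp
  ultimately obtain N where N: "\<And>n. n \<ge> N \<Longrightarrow> (norm (y - s n))\<^sup>2 < d\<^sup>2 + e\<^sup>2 / 4"
    by (metis (no_types, lifting) eventually_sequentially order_tendstoD(2))
  show "\<exists>N. \<forall>m\<ge>N. \<forall>n\<ge>N. norm (s m - s n) < e"
  proof (intro exI allI impI)
    fix m n assume "m \<ge> N" "n \<ge> N"
    have "scaleR (1/2) (s m) + scaleR (1/2) (s n) \<in> M"
      using convexD[OF \<open>convex M\<close> s s] by simp
    moreover have "(y - s m) + (y - s n) = 2 *\<^sub>R (y - (scaleR (1/2) (s m) + scaleR (1/2) (s n)))"
      by (simp add: algebra_simps scaleR_2)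
    ultimately have "2 * d \<le> norm ((y - s m) + (y - s n))"
      using lower by simp
    then have "(2 * d)\<^sup>2 \<le> (norm ((y - s m) + (y - s n)))\<^sup>2"
      using \<open>d \<ge> 0\<close> by (intro power_mono) auto
    moreover have "(norm (s m - s n))\<^sup>2
        = 2 * (norm (y - s m))\<^sup>2 + 2 * (norm (y - s n))\<^sup>2 - (norm ((y - s m) + (y - s n)))\<^sup>2"
      using parallelogram_law_cinner[of "y - s m" "y - s n"] by (simp add: norm_minus_commute)
    ultimately have "(norm (s m - s n))\<^sup>2 < e\<^sup>2"
      using N[OF \<open>m \<ge> N\<close>] N[OF \<open>n \<ge> N\<close>] by (simp add: power_mult_distrib)
    then show "norm (s m - s n) < e"
      using \<open>e > 0\<close> by (simp add: power_less_imp_less_base)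
  qed
qed

lemma nearest_point_exists:
  fixes M :: "'a::chilbert set"
  assumes "closed M" "convex M" "M \<noteq> {}"
  shows "\<exists>m\<in>M. \<forall>w\<in>M. norm (y - m) \<le> norm (y - w)"
proof -
  define d where "d = infdist y M"
  have lower: "d \<le> norm (y - w)" if "w \<in> M" for w
    using infdist_le[OF that, of y] by (simp add: d_def dist_norm)
  have "\<exists>m\<in>M. norm (y - m) < d + 1 / Suc n" for n
  proof -
    have "(INF w\<in>M. dist y w) < d + 1 / Suc n"
      using \<open>M \<noteq> {}\<close> by (simp add: d_def infdist_notempty)
    then show ?thesis
      using cINF_less_iff[OF \<open>M \<noteq> {}\<close> bdd_below_image_dist] by (auto simp: dist_norm)
  qed
  then obtain s where s: "\<And>n. s n \<in> M" and close: "\<And>n. norm (y - s n) < d + 1 / Suc n"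
    by metis
  have lim: "(\<lambda>n. norm (y - s n)) \<longlonglongrightarrow> d"
  proof (rule tendsto_sandwich)
    show "\<forall>\<^sub>F n in sequentially. d \<le> norm (y - s n)" using lower s by simp
    show "\<forall>\<^sub>F n in sequentially. norm (y - s n) \<le> d + 1 / Suc n" using close by (simp add: less_imp_le)
    show "(\<lambda>n. d + 1 / Suc n) \<longlonglongrightarrow> d"
      using LIMSEQ_inverse_real_of_nat_add[of d] by (simp add: inverse_eq_divide)
  qed simp
  obtain m where "s \<longlonglongrightarrow> m"
    using Cauchy_minimizing_sequence[OF \<open>convex M\<close> s lower lim] Cauchy_convergent_iff
      convergent_def by blast
  with \<open>closed M\<close> s have "m \<in> M" by (metis closed_sequentially)
  moreover have "norm (y - m) = d"
    using lim by (intro LIMSEQ_unique[OF _ lim] tendsto_intros \<open>s \<longlonglongrightarrow> m\<close>)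
  ultimately show ?thesis using lower by blast
qed

lemma nearest_point_orthogonal:
  fixes M :: "'a::chilbert set"
  assumes "csubspace M" "m \<in> M" and nearest: "\<forall>w\<in>M. norm (y - m) \<le> norm (y - w)" and "w \<in> M"
  shows "cinner (y - m) w = 0"
proof (rule ccontr)
  assume "cinner (y - m) w \<noteq> 0"
  define c where "c = cinner (y - m) w"
  define s where "s = 1 / ((norm w)\<^sup>2 + 1)"
  have "(norm w)\<^sup>2 + 1 > 0"
    by (simp add: add_nonneg_pos)
  then have "s > 0" and "s * (norm w)\<^sup>2 < 1"
    by (simp_all add: s_def field_simps)
  define t where "t = complex_of_real s * c"
  \<comment> \<open>moving from \<open>m\<close> towards \<open>m + t w\<close> strictly decreases the distance to \<open>y\<close>\<close>
  have "m + scaleC t w \<in> M" using assms by (simp add: csubspace_add csubspace_scaleC)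
  then have "norm (y - m) \<le> norm ((y - m) - scaleC t w)"
    using nearest by (metis diff_diff_eq)
  moreover have "(norm ((y - m) - scaleC t w))\<^sup>2
      = (norm (y - m))\<^sup>2 - s * (cmod c)\<^sup>2 * (2 - s * (norm w)\<^sup>2)"
  proof -
    have "Re (cnj t * c) = s * (cmod c)\<^sup>2"
      unfolding t_def by (simp only: complex_cnj_mult complex_cnj_complex_of_real mult.assoc
          complex_norm_square[symmetric] mult.commute[of "cnj c"] of_real_mult[symmetric]
          Re_complex_of_real)
    moreover have "(cmod t)\<^sup>2 = s\<^sup>2 * (cmod c)\<^sup>2"
      using \<open>s > 0\<close> by (simp add: t_def norm_mult power_mult_distrib)
    ultimately show ?thesis
      unfolding norm_diff_scaleC_square c_def[symmetric] by (simp add: algebra_simps power2_eq_square)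
  qed
  ultimately have "(norm (y - m))\<^sup>2 \<le> (norm (y - m))\<^sup>2 - s * (cmod c)\<^sup>2 * (2 - s * (norm w)\<^sup>2)"
    by (metis norm_ge_zero power_mono)
  moreover have "s * (cmod c)\<^sup>2 * (2 - s * (norm w)\<^sup>2) > 0"
    using \<open>s > 0\<close> \<open>s * (norm w)\<^sup>2 < 1\<close> \<open>cinner (y - m) w \<noteq> 0\<close> by (simp add: c_def)
  ultimately show False
    by linarith
qed

lemma orthogonal_projection_exists:
  fixes M :: "'a::chilbert set"
  assumes "csubspace M" "closed M"
  shows "\<exists>m\<in>M. \<forall>w\<in>M. cinner (y - m) w = 0"
  using nearest_point_exists[OF \<open>closed M\<close> csubspace_imp_convex, of y] nearest_point_orthogonal
    assms csubspace_0 by blast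

definition cinner_preserving_on :: "'a::chilbert set \<Rightarrow> ('a \<Rightarrow> 'a) \<Rightarrow> bool" where
  "cinner_preserving_on V U \<longleftrightarrow> (\<forall>x\<in>V. \<forall>y\<in>V. cinner (U x) (U y) = cinner x y)"

lemma cinner_preserving_onD:
  "cinner_preserving_on V U \<Longrightarrow> x \<in> V \<Longrightarrow> y \<in> V \<Longrightarrow> cinner (U x) (U y) = cinner x y"
  by (simp add: cinner_preserving_on_def)

lemma cinner_preserving_on_norm:
  "cinner_preserving_on V U \<Longrightarrow> x \<in> V \<Longrightarrow> norm (U x) = norm x"
  by (intro norm_eq_if_cinner_self_eq) (simp add: cinner_preserving_onD)

lemma cinner_preserving_on_dist:
  assumes "cinner_preserving_on V U" "x \<in> V" "y \<in> V"
  shows "dist (U x) (U y) = dist x y"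
proof -
  have "cinner (U x - U y) (U x - U y) = cinner (x - y) (x - y)"
    using assms by (simp add: cinner_simps cinner_preserving_onD)
  then show ?thesis
    unfolding dist_norm by (rule norm_eq_if_cinner_self_eq)
qed

lemma cinner_preserving_on_add:
  assumes "csubspace V" "cinner_preserving_on V U" "x \<in> V" "y \<in> V"
  shows "U (x + y) = U x + U y"
proof -
  have "x + y \<in> V" using assms by (simp add: csubspace_add)
  then have "cinner (U (x + y) - U x - U y) (U (x + y) - U x - U y)
      = cinner ((x + y) - x - y) ((x + y) - x - y)"
    unfolding cinner_diff_left cinner_diff_right using assms by (simp add: cinner_preserving_onD)
  then have "U (x + y) - U x - U y = 0"
    by simp
  then show ?thesis by (simp add: algebra_simps)
qed

lemma cinner_preserving_on_scaleC:
  assumes "csubspace V" "cinner_preserving_on V U" "x \<in> V"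
  shows "U (scaleC a x) = scaleC a (U x)"
proof -
  have "scaleC a x \<in> V" using assms by (simp add: csubspace_scaleC)
  then have "cinner (U (scaleC a x) - scaleC a (U x)) (U (scaleC a x) - scaleC a (U x))
      = cinner (scaleC a x - scaleC a x) (scaleC a x - scaleC a x)"
    unfolding cinner_simps using assms
    by (simp add: cinner_preserving_onD cinner_scaleC_left cinner_scaleC_right algebra_simps)
  then show ?thesis by simp
qed

lemma closed_isometric_image:
  fixes f :: "'a::complete_space \<Rightarrow> 'b::metric_space"
  assumes "closed V" and isometric: "\<And>x y. x \<in> V \<Longrightarrow> y \<in> V \<Longrightarrow> dist (f x) (f y) = dist x y"
  shows "closed (f ` V)"
  unfolding closed_sequential_limits
proof (intro allI impI)
  fix z l assume zl: "(\<forall>n. z n \<in> f ` V) \<and> z \<longlonglongrightarrow> l"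
  then have "z \<longlonglongrightarrow> l" by blast
  have "\<exists>x. \<forall>n. x n \<in> V \<and> z n = f (x n)"
    by (rule choice) (use zl in blast)
  then obtain x where x: "\<And>n. x n \<in> V" and z: "z = (\<lambda>n. f (x n))"
    by auto
  have "Cauchy x"
    using LIMSEQ_imp_Cauchy[OF \<open>z \<longlonglongrightarrow> l\<close>] x by (simp add: z Cauchy_def isometric)
  then obtain y where "x \<longlonglongrightarrow> y" using Cauchy_convergent_iff convergent_def by blast
  with \<open>closed V\<close> x have "y \<in> V" by (metis closed_sequentially)
  have "(\<lambda>n. dist (x n) y) \<longlonglongrightarrow> 0"
    using \<open>x \<longlonglongrightarrow> y\<close> by (rule tendsto_dist_iff[THEN iffD1])
  then have "(\<lambda>n. dist (f (x n)) (f y)) \<longlonglongrightarrow> 0"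
    using x \<open>y \<in> V\<close> by (simp add: isometric)
  then have "z \<longlonglongrightarrow> f y"
    unfolding z by (rule tendsto_dist_iff[THEN iffD2])
  then show "l \<in> f ` V"
    using \<open>z \<longlonglongrightarrow> l\<close> \<open>y \<in> V\<close> LIMSEQ_unique by blast
qed

lemma cinner_preserving_on_extend_closure:
  fixes U0 :: "'a::chilbert \<Rightarrow> 'a"
  assumes pres: "cinner_preserving_on S U0"
  obtains U where "cinner_preserving_on (closure S) U" "\<And>x. x \<in> S \<Longrightarrow> U x = U0 x"
    "U ` closure S \<subseteq> closure (U0 ` S)"
proof -
  have "uniformly_continuous_on S U0"
    unfolding uniformly_continuous_on_def
  proof (intro allI impI)
    fix e :: real assume "e > 0"
    then show "\<exists>d>0. \<forall>x\<in>S. \<forall>x'\<in>S. dist x' x < d \<longrightarrow> dist (U0 x') (U0 x) < e"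
      by (intro exI[of _ e]) (simp add: cinner_preserving_on_dist[OF pres])
  qed
  then obtain U where "uniformly_continuous_on (closure S) U" and ext: "\<And>x. x \<in> S \<Longrightarrow> U0 x = U x"
    using uniformly_continuous_on_extension_on_closure by metis
  have cont: "continuous_on (closure S) U"
    using \<open>uniformly_continuous_on (closure S) U\<close> by (rule uniformly_continuous_imp_continuous)
  \<comment> \<open>the identity \<open>(U x, U y) = (x, y)\<close> passes to the closure one variable at a time\<close>
  have on_S: "cinner (U x) (U y) - cinner x y = 0" if "x \<in> closure S" "y \<in> S" for x y
  proof (rule continuous_constant_on_closure[OF _ _ that(1)])
    show "continuous_on (closure S) (\<lambda>x. cinner (U x) (U y) - cinner x y)"
      by (intro continuous_on_diff continuous_on_cinner cont continuous_on_const continuous_on_id)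
    show "cinner (U x') (U y) - cinner x' y = 0" if "x' \<in> S" for x'
      using ext[OF that] ext[OF \<open>y \<in> S\<close>] cinner_preserving_onD[OF pres that \<open>y \<in> S\<close>] by simp
  qed
  have "cinner (U x) (U y) - cinner x y = 0" if "x \<in> closure S" "y \<in> closure S" for x y
  proof (rule continuous_constant_on_closure[OF _ _ that(2)])
    show "continuous_on (closure S) (\<lambda>y. cinner (U x) (U y) - cinner x y)"
      by (intro continuous_on_diff continuous_on_cinner cont continuous_on_const continuous_on_id)
  qed (use on_S that in blast)
  then have "cinner_preserving_on (closure S) U"
    by (simp add: cinner_preserving_on_def)
  moreover have "\<And>x. x \<in> S \<Longrightarrow> U x = U0 x"
    using ext by simp
  moreover have "U ` closure S \<subseteq> closure (U0 ` S)"
  proof (rule image_closure_subset[OF cont closed_closure])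
    show "U ` S \<subseteq> closure (U0 ` S)"
      using ext closure_subset[of "U0 ` S"] by force
  qed
  ultimately show ?thesis
    by (rule that)
qed

section \<open>Orthonormal sets and unitary maps between subspaces of equal dimension\<close>

definition orthonormal :: "'a::chilbert set \<Rightarrow> bool" where
  "orthonormal B \<longleftrightarrow> (\<forall>b\<in>B. cinner b b = 1) \<and> (\<forall>b\<in>B. \<forall>b'\<in>B. b \<noteq> b' \<longrightarrow> cinner b b' = 0)"

lemma orthonormal_cinner:
  "orthonormal B \<Longrightarrow> b \<in> B \<Longrightarrow> b' \<in> B \<Longrightarrow> cinner b b' = (if b = b' then 1 else 0)"
  by (auto simp: orthonormal_def)

lemma orthonormal_basis_of_orthonormal: "orthonormal_basis_of B V \<Longrightarrow> orthonormal B"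
  by (simp add: orthonormal_basis_of_def orthonormal_def)

lemma same_hilbert_dim_sym: "same_hilbert_dim V W \<Longrightarrow> same_hilbert_dim W V"
  unfolding same_hilbert_dim_def by (meson bij_betw_inv_into)

lemma cspanI: "finite F \<Longrightarrow> F \<subseteq> B \<Longrightarrow> (\<Sum>b\<in>F. scaleC (c b) b) \<in> cspan B"
  by (auto simp: cspan_def)

lemma cspan_superset: "b \<in> B \<Longrightarrow> b \<in> cspan B"
  using cspanI[of "{b}" B "\<lambda>_. 1"] by (simp add: scaleC_one)

lemma csubspace_cspan: "csubspace (cspan B)"
  unfolding csubspace_def
proof (intro conjI ballI allI)
  show "0 \<in> cspan B" using cspanI[of "{}" B] by simp
next
  fix x y assume "x \<in> cspan B" "y \<in> cspan B"
  then obtain F c G d where F: "finite F" "F \<subseteq> B" "x = (\<Sum>b\<in>F. scaleC (c b) b)"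
    and G: "finite G" "G \<subseteq> B" "y = (\<Sum>b\<in>G. scaleC (d b) b)"
    by (auto simp: cspan_def)
  have extend: "(\<Sum>b\<in>H. scaleC (e b) b) = (\<Sum>b\<in>F \<union> G. scaleC (if b \<in> H then e b else 0) b)"
    if "H \<subseteq> F \<union> G" for H e
  proof -
    have "(\<Sum>b\<in>F \<union> G. scaleC (if b \<in> H then e b else 0) b)
        = (\<Sum>b\<in>F \<union> G. if b \<in> H then scaleC (e b) b else 0)"
      by (rule sum.cong) auto
    also have "\<dots> = (\<Sum>b\<in>H. scaleC (e b) b)"
      using sum.inter_restrict[of "F \<union> G" "\<lambda>b. scaleC (e b) b" H] that F(1) G(1)
      by (simp add: Int_absorb1)
    finally show ?thesis ..
  qed
  have "x + y = (\<Sum>b\<in>F \<union> G. scaleC ((if b \<in> F then c b else 0) + (if b \<in> G then d b else 0)) b)"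
    using extend[of F c] extend[of G d] F(3) G(3) by (simp add: scaleC_add_left sum.distrib)
  then show "x + y \<in> cspan B"
    using F G by (simp add: cspanI)
next
  fix a x assume "x \<in> cspan B"
  then obtain F c where "finite F" "F \<subseteq> B" "x = (\<Sum>b\<in>F. scaleC (c b) b)"
    by (auto simp: cspan_def)
  then show "scaleC a x \<in> cspan B"
    using cspanI[of F B "\<lambda>b. a * c b"] by (simp add: scaleC_sum_right scaleC_mult)
qed

lemma orthonormal_cinner_sum_left:
  assumes "orthonormal B" "finite F" "F \<subseteq> B" "b \<in> B"
  shows "cinner (\<Sum>i\<in>F. scaleC (c i) i) b = (if b \<in> F then c b else 0)"
proof -
  have "(\<Sum>i\<in>F. c i * cinner i b) = (\<Sum>i\<in>F. if i = b then c b else 0)"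
    by (rule sum.cong) (use assms in \<open>auto simp: orthonormal_cinner\<close>)
  then show ?thesis
    using assms(2) by (simp add: cinner_sum_left cinner_scaleC_left)
qed

lemma orthonormal_cinner_sums:
  fixes h :: "'i \<Rightarrow> 'a::chilbert"
  assumes "orthonormal B" "finite F" "inj_on h F" "h ` F \<subseteq> B"
  shows "cinner (\<Sum>i\<in>F. scaleC (\<alpha> i) (h i)) (\<Sum>i\<in>F. scaleC (\<beta> i) (h i)) = (\<Sum>i\<in>F. \<alpha> i * cnj (\<beta> i))"
proof -
  have "cinner (h i) (h j) = (if i = j then 1 else 0)" if "i \<in> F" "j \<in> F" for i j
  proof -
    have "h i \<in> B" "h j \<in> B" using assms(4) that by auto
    then show ?thesis
      using orthonormal_cinner[OF assms(1)] inj_on_eq_iff[OF assms(3) that] by simp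
  qed
  then have "cinner (\<Sum>i\<in>F. scaleC (\<alpha> i) (h i)) (\<Sum>i\<in>F. scaleC (\<beta> i) (h i))
      = (\<Sum>j\<in>F. \<Sum>i\<in>F. if i = j then \<alpha> j * cnj (\<beta> j) else 0)"
    by (auto simp: cinner_sum_left cinner_sum_right cinner_scaleC_left cinner_scaleC_right
        sum_distrib_left intro!: sum.cong)
  then show ?thesis using assms(2) by simp
qed

definition coeff_support :: "'a::chilbert set \<Rightarrow> 'a \<Rightarrow> 'a set" where
  "coeff_support B x = {b \<in> B. cinner x b \<noteq> 0}"

lemma cspan_fourier_expansion:
  assumes "orthonormal B" "x \<in> cspan B"
  shows "finite (coeff_support B x)"
    and "\<And>H. finite H \<Longrightarrow> coeff_support B x \<subseteq> H \<Longrightarrow> H \<subseteq> B \<Longrightarrow> x = (\<Sum>b\<in>H. scaleC (cinner x b) b)"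
proof -
  obtain F c where F: "finite F" "F \<subseteq> B" and x: "x = (\<Sum>b\<in>F. scaleC (c b) b)"
    using assms(2) by (auto simp: cspan_def)
  have coeff: "cinner x b = (if b \<in> F then c b else 0)" if "b \<in> B" for b
    unfolding x using orthonormal_cinner_sum_left[OF assms(1) F that] .
  then have "coeff_support B x \<subseteq> F" by (auto simp: coeff_support_def split: if_splits)
  then show "finite (coeff_support B x)" using F(1) finite_subset by blast
  fix H assume H: "finite H" "coeff_support B x \<subseteq> H" "H \<subseteq> B"
  have "(\<Sum>b\<in>F. scaleC (cinner x b) b) = (\<Sum>b\<in>F. scaleC (c b) b)"
    using F coeff by (intro sum.cong) auto
  then have "x = (\<Sum>b\<in>F. scaleC (cinner x b) b)"
    using x by simp
  also have "\<dots> = (\<Sum>b\<in>F \<union> H. scaleC (cinner x b) b)"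
    using F H coeff by (intro sum.mono_neutral_left) (auto simp: coeff_support_def)
  also have "\<dots> = (\<Sum>b\<in>H. scaleC (cinner x b) b)"
    using F H coeff by (intro sum.mono_neutral_right) (auto simp: coeff_support_def)
  finally show "x = (\<Sum>b\<in>H. scaleC (cinner x b) b)" .
qed

definition cspan_map :: "'a::chilbert set \<Rightarrow> ('a \<Rightarrow> 'a) \<Rightarrow> 'a \<Rightarrow> 'a" where
  "cspan_map B g x = (\<Sum>b\<in>coeff_support B x. scaleC (cinner x b) (g b))"

lemma cspan_map_expansion:
  "finite H \<Longrightarrow> coeff_support B x \<subseteq> H \<Longrightarrow> H \<subseteq> B \<Longrightarrow>
    cspan_map B g x = (\<Sum>b\<in>H. scaleC (cinner x b) (g b))"
  unfolding cspan_map_def by (intro sum.mono_neutral_left) (auto simp: coeff_support_def)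

lemma cinner_preserving_on_cspan_map:
  assumes B1: "orthonormal B1" and B2: "orthonormal B2" and "inj_on g B1" "g ` B1 \<subseteq> B2"
  shows "cinner_preserving_on (cspan B1) (cspan_map B1 g)"
  unfolding cinner_preserving_on_def
proof (intro ballI)
  fix x y assume x: "x \<in> cspan B1" and y: "y \<in> cspan B1"
  define H where "H = coeff_support B1 x \<union> coeff_support B1 y"
  have H: "finite H" "H \<subseteq> B1"
    using cspan_fourier_expansion(1)[OF B1] x y by (auto simp: H_def coeff_support_def)
  have "cspan_map B1 g x = (\<Sum>b\<in>H. scaleC (cinner x b) (g b))"
    and "cspan_map B1 g y = (\<Sum>b\<in>H. scaleC (cinner y b) (g b))"
    using cspan_map_expansion[OF H(1) _ H(2)] by (simp_all add: H_def)
  then have "cinner (cspan_map B1 g x) (cspan_map B1 g y) = (\<Sum>b\<in>H. cinner x b * cnj (cinner y b))"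
    using H assms(3,4) by (simp add: orthonormal_cinner_sums[OF B2 H(1)] inj_on_subset image_mono
        order_trans[of "g ` H" "g ` B1" B2])
  also have "\<dots> = cinner (\<Sum>b\<in>H. scaleC (cinner x b) b) (\<Sum>b\<in>H. scaleC (cinner y b) b)"
    using orthonormal_cinner_sums[OF B1 H(1), of "\<lambda>b. b"] H by simp
  also have "\<dots> = cinner x y"
    using cspan_fourier_expansion(2)[OF B1 _ H(1) _ H(2)] x y by (simp add: H_def)
  finally show "cinner (cspan_map B1 g x) (cspan_map B1 g y) = cinner x y" .
qed

lemma cspan_map_image:
  assumes B1: "orthonormal B1" and g: "bij_betw g B1 B2"
  shows "cspan_map B1 g ` cspan B1 = cspan B2"
proof
  have "g ` B1 = B2" using g by (simp add: bij_betw_def)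
  then show "cspan_map B1 g ` cspan B1 \<subseteq> cspan B2"
    unfolding cspan_map_def
    by (intro image_subsetI csubspace_sum[OF csubspace_cspan] csubspace_scaleC[OF csubspace_cspan]
        cspan_superset) (auto simp: coeff_support_def)
next
  show "cspan B2 \<subseteq> cspan_map B1 g ` cspan B1"
  proof
    fix z assume "z \<in> cspan B2"
    then obtain F' c where F': "finite F'" "F' \<subseteq> B2" and z: "z = (\<Sum>b\<in>F'. scaleC (c b) b)"
      by (auto simp: cspan_def)
    define F where "F = inv_into B1 g ` F'"
    have F: "finite F" "F \<subseteq> B1"
      using F' g by (auto simp: F_def bij_betw_def intro: inv_into_into)
    have "g ` F = F'"
      using F' g by (force simp: F_def bij_betw_def image_image f_inv_into_f)
    then have bij: "bij_betw g F F'"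
      using inj_on_subset[OF bij_betw_imp_inj_on[OF g] F(2)] by (simp add: bij_betw_def)
    define x where "x = (\<Sum>b\<in>F. scaleC (c (g b)) b)"
    have coeff: "cinner x b = (if b \<in> F then c (g b) else 0)" if "b \<in> B1" for b
      unfolding x_def using orthonormal_cinner_sum_left[OF B1 F that] .
    have "cspan_map B1 g x = (\<Sum>b\<in>F. scaleC (c (g b)) (g b))"
      using coeff F by (subst cspan_map_expansion[OF F(1) _ F(2)])
        (auto simp: coeff_support_def split: if_splits intro!: sum.cong)
    also have "\<dots> = z"
      unfolding z using sum.reindex_bij_betw[OF bij, of "\<lambda>b. scaleC (c b) b"] by simp
    finally show "z \<in> cspan_map B1 g ` cspan B1"
      using F by (metis x_def cspanI image_eqI)
  qed
qed

lemma same_hilbert_dim_unitary: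
  assumes "same_hilbert_dim V W"
  obtains U where "cinner_preserving_on V U" "U ` V = W"
proof -
  obtain B1 B2 g where B1: "orthonormal_basis_of B1 V" and B2: "orthonormal_basis_of B2 W"
    and g: "bij_betw g B1 B2"
    using assms by (auto simp: same_hilbert_dim_def)
  have V: "V = closure (cspan B1)" and W: "W = closure (cspan B2)"
    using B1 B2 by (auto simp: orthonormal_basis_of_def)
  note B1' = orthonormal_basis_of_orthonormal[OF B1] and B2' = orthonormal_basis_of_orthonormal[OF B2]
  define U0 where "U0 = cspan_map B1 g"
  have pres0: "cinner_preserving_on (cspan B1) U0"
    unfolding U0_def using bij_betw_imp_surj_on[OF g]
    by (intro cinner_preserving_on_cspan_map[OF B1' B2' bij_betw_imp_inj_on[OF g]]) simp
  have U0: "U0 ` cspan B1 = cspan B2"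
    unfolding U0_def by (rule cspan_map_image[OF B1' g])
  obtain U where pres: "cinner_preserving_on V U" and ext: "\<And>x. x \<in> cspan B1 \<Longrightarrow> U x = U0 x"
    and "U ` V \<subseteq> closure (U0 ` cspan B1)"
    using cinner_preserving_on_extend_closure[OF pres0, folded V] by blast
  then have "U ` V \<subseteq> W" by (simp add: U0 W)
  moreover have "W \<subseteq> U ` V"
  proof -
    have "closed (U ` V)"
      using V pres by (intro closed_isometric_image) (auto simp: cinner_preserving_on_dist)
    moreover have "cspan B2 \<subseteq> U ` V"
      using U0 ext closure_subset unfolding V by (force simp flip: U0)
    ultimately show ?thesis
      unfolding W by (rule closure_minimal[rotated])
  qed
  ultimately show ?thesis
    using pres by (intro that) auto
qed

section \<open>The adjoint of a densely defined symmetric operator\<close>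

locale closed_symmetric_operator =
  fixes S :: "'a::chilbert op"
  assumes linear_S: "linear_op S" and closed_S: "closed_op S" and dense_S: "densely_defined S"
    and symmetric_S: "symmetric_op S"
begin

abbreviation D :: "'a set" where "D \<equiv> fst S"
abbreviation A :: "'a \<Rightarrow> 'a" where "A \<equiv> snd S"

lemma csubspace_D: "csubspace D"
  using linear_S by (simp add: linear_op_def)

lemma A_add: "x \<in> D \<Longrightarrow> y \<in> D \<Longrightarrow> A (x + y) = A x + A y"
  using linear_S by (simp add: linear_op_def)

lemma A_scaleC: "x \<in> D \<Longrightarrow> A (scaleC a x) = scaleC a (A x)"
  using linear_S by (simp add: linear_op_def)

lemma A_diff: "x \<in> D \<Longrightarrow> y \<in> D \<Longrightarrow> A (x - y) = A x - A y"
  using A_add[of "x - y" y] csubspace_diff[OF csubspace_D] by (simp add: eq_diff_eq)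

lemma A_symmetric: "x \<in> D \<Longrightarrow> y \<in> D \<Longrightarrow> cinner (A x) y = cinner x (A y)"
  using symmetric_S by (simp add: symmetric_op_def)

lemma orthogonal_D_eq_0:
  assumes "\<forall>f\<in>D. cinner f w = 0"
  shows "w = 0"
proof -
  have "closed {f. cinner f w = 0}"
    by (intro closed_Collect_eq continuous_intros)
  then have "closure D \<subseteq> {f. cinner f w = 0}"
    using assms by (intro closure_minimal) auto
  moreover have "w \<in> closure D"
    using dense_S by (simp add: densely_defined_def)
  ultimately have "cinner w w = 0"
    by blast
  then show ?thesis by simp
qed

lemma adj_eqI:
  assumes "\<forall>f\<in>D. cinner (A f) g = cinner f h"
  shows "g \<in> adj_dom S" "adj_fun S g = h"
proof -
  show "g \<in> adj_dom S" using assms by (auto simp: adj_dom_def)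
  show "adj_fun S g = h" unfolding adj_fun_def
  proof (rule the_equality)
    fix h' assume "\<forall>f\<in>D. cinner (A f) g = cinner f h'"
    then have "\<forall>f\<in>D. cinner f (h' - h) = 0"
      using assms by (simp add: cinner_diff_right)
    then show "h' = h" using orthogonal_D_eq_0[of "h' - h"] by simp
  qed (rule assms)
qed

lemma adj_cinner:
  assumes "g \<in> adj_dom S" "f \<in> D"
  shows "cinner (A f) g = cinner f (adj_fun S g)"
proof -
  obtain h where h: "\<forall>f\<in>D. cinner (A f) g = cinner f h"
    using assms(1) by (auto simp: adj_dom_def)
  then show ?thesis using adj_eqI(2)[OF h] assms(2) by simp
qed

lemma adj_cinner': "g \<in> adj_dom S \<Longrightarrow> f \<in> D \<Longrightarrow> cinner g (A f) = cinner (adj_fun S g) f"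
  by (metis adj_cinner cinner_commute)

lemma adj_add:
  assumes "x \<in> adj_dom S" "y \<in> adj_dom S"
  shows "x + y \<in> adj_dom S" "adj_fun S (x + y) = adj_fun S x + adj_fun S y"
proof -
  have "\<forall>f\<in>D. cinner (A f) (x + y) = cinner f (adj_fun S x + adj_fun S y)"
    using assms by (simp add: cinner_add_right adj_cinner)
  then show "x + y \<in> adj_dom S" "adj_fun S (x + y) = adj_fun S x + adj_fun S y"
    by (rule adj_eqI)+
qed

lemma adj_diff:
  assumes "x \<in> adj_dom S" "y \<in> adj_dom S"
  shows "x - y \<in> adj_dom S" "adj_fun S (x - y) = adj_fun S x - adj_fun S y"
proof -
  have "\<forall>f\<in>D. cinner (A f) (x - y) = cinner f (adj_fun S x - adj_fun S y)"
    using assms by (simp add: cinner_diff_right adj_cinner)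
  then show "x - y \<in> adj_dom S" "adj_fun S (x - y) = adj_fun S x - adj_fun S y"
    by (rule adj_eqI)+
qed

lemma adj_extends_S:
  assumes "x \<in> D"
  shows "x \<in> adj_dom S" "adj_fun S x = A x"
proof -
  have "\<forall>f\<in>D. cinner (A f) x = cinner f (A x)"
    using assms by (simp add: A_symmetric)
  then show "x \<in> adj_dom S" "adj_fun S x = A x"
    by (rule adj_eqI)+
qed

lemma defect_space_iff:
  "g \<in> defect_space S l \<longleftrightarrow> (\<forall>f\<in>D. cinner (A f - scaleC (cnj l) f) g = 0)"
proof
  assume "g \<in> defect_space S l"
  then show "\<forall>f\<in>D. cinner (A f - scaleC (cnj l) f) g = 0"
    by (simp add: defect_space_def cinner_diff_left adj_cinner cinner_scaleC_left cinner_scaleC_right)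
next
  assume "\<forall>f\<in>D. cinner (A f - scaleC (cnj l) f) g = 0"
  then have "\<forall>f\<in>D. cinner (A f) g = cinner f (scaleC l g)"
    by (simp add: cinner_diff_left cinner_scaleC_left cinner_scaleC_right)
  then show "g \<in> defect_space S l"
    unfolding defect_space_def using adj_eqI by blast
qed

lemma defect_space_eq_orthogonal_complement:
  "defect_space S l = {g. \<forall>x\<in>(\<lambda>f. A f - scaleC (cnj l) f) ` D. cinner x g = 0}"
  by (auto simp: defect_space_iff)

lemma csubspace_defect_space: "csubspace (defect_space S l)"
  unfolding defect_space_eq_orthogonal_complement by (rule csubspace_orthogonal_complement)

lemma closed_defect_space: "closed (defect_space S l)"
  unfolding defect_space_eq_orthogonal_complement by (rule closed_orthogonal_complement)

lemma defect_space_adj: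
  assumes "g \<in> defect_space S l"
  shows "g \<in> adj_dom S" "adj_fun S g = scaleC l g"
  using assms by (simp_all add: defect_space_def)

lemma defect_space_subset_dom_plus_defect: "defect_space S l \<subseteq> dom_plus_defect S l"
  unfolding dom_plus_defect_def using csubspace_0[OF csubspace_D] by force

lemma dom_plus_defect_subset:
  assumes "defect_space S l \<subseteq> dom_plus_defect S m"
  shows "dom_plus_defect S l \<subseteq> dom_plus_defect S m"
proof
  fix f assume "f \<in> dom_plus_defect S l"
  then obtain f0 g where "f0 \<in> D" "g \<in> defect_space S l" "f = f0 + g"
    by (auto simp: dom_plus_defect_def)
  moreover obtain f1 g1 where "f1 \<in> D" "g1 \<in> defect_space S m" "g = f1 + g1"
    using assms \<open>g \<in> defect_space S l\<close> by (auto simp: dom_plus_defect_def)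
  ultimately have "f0 + f1 \<in> D" "f = (f0 + f1) + g1" "g1 \<in> defect_space S m"
    by (simp_all add: csubspace_add[OF csubspace_D] add.assoc)
  then show "f \<in> dom_plus_defect S m"
    unfolding dom_plus_defect_def by blast
qed

end

section \<open>Von Neumann's decomposition of the adjoint's domain\<close>

context closed_symmetric_operator
begin

abbreviation N_plus :: "'a set" where "N_plus \<equiv> defect_space S \<i>"
abbreviation N_minus :: "'a set" where "N_minus \<equiv> defect_space S (- \<i>)"

definition range_plus_i :: "'a set" where
  "range_plus_i = (\<lambda>f. A f + scaleC \<i> f) ` D"

lemma A_zero: "A 0 = 0"
  using A_scaleC[OF csubspace_0[OF csubspace_D], of 0] by simp

lemma norm_A_plus_i_square:
  assumes "x \<in> D"
  shows "(norm (A x + scaleC \<i> x))\<^sup>2 = (norm (A x))\<^sup>2 + (norm x)\<^sup>2"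
proof -
  have "cinner (A x + scaleC \<i> x) (A x + scaleC \<i> x) = cinner (A x) (A x) + cinner x x"
    by (simp add: cinner_simps A_symmetric[OF assms assms] algebra_simps)
  from arg_cong[where f=Re, OF this] show ?thesis
    by (simp add: Re_cinner_self)
qed

lemma csubspace_range_plus_i: "csubspace range_plus_i"
  unfolding csubspace_def range_plus_i_def
proof (intro conjI ballI allI)
  show "0 \<in> (\<lambda>f. A f + scaleC \<i> f) ` D"
    using csubspace_0[OF csubspace_D] A_zero by force
next
  fix u v assume "u \<in> (\<lambda>f. A f + scaleC \<i> f) ` D" "v \<in> (\<lambda>f. A f + scaleC \<i> f) ` D"
  then obtain x y where "x \<in> D" "u = A x + scaleC \<i> x" "y \<in> D" "v = A y + scaleC \<i> y" by auto
  then have "x + y \<in> D" "u + v = A (x + y) + scaleC \<i> (x + y)"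
    by (simp_all add: csubspace_add[OF csubspace_D] A_add scaleC_add_right algebra_simps)
  then show "u + v \<in> (\<lambda>f. A f + scaleC \<i> f) ` D" by blast
next
  fix a u assume "u \<in> (\<lambda>f. A f + scaleC \<i> f) ` D"
  then obtain x where "x \<in> D" "u = A x + scaleC \<i> x" by auto
  then have "scaleC a x \<in> D" "scaleC a u = A (scaleC a x) + scaleC \<i> (scaleC a x)"
    by (simp_all add: csubspace_scaleC[OF csubspace_D] A_scaleC scaleC_add_right
        flip: scaleC_mult add: mult.commute)
  then show "scaleC a u \<in> (\<lambda>f. A f + scaleC \<i> f) ` D" by blast
qed

text \<open>Closedness of \<open>S\<close> enters only here: \<open>\<parallel>(S + i) f\<parallel>\<^sup>2 = \<parallel>S f\<parallel>\<^sup>2 + \<parallel>f\<parallel>\<^sup>2\<close> turns a Cauchy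
  sequence in the range into a Cauchy sequence in the graph.\<close>

lemma closed_range_plus_i: "closed range_plus_i"
  unfolding closed_sequential_limits
proof (intro allI impI)
  fix y l assume yl: "(\<forall>n. y n \<in> range_plus_i) \<and> y \<longlonglongrightarrow> l"
  have "\<exists>x. \<forall>n. x n \<in> D \<and> y n = A (x n) + scaleC \<i> (x n)"
    by (rule choice) (use yl in \<open>auto simp: range_plus_i_def\<close>)
  then obtain x where x: "\<And>n. x n \<in> D" and y: "\<And>n. y n = A (x n) + scaleC \<i> (x n)" by blast
  have bound: "norm (x m - x n) \<le> norm (y m - y n) \<and> norm (A (x m) - A (x n)) \<le> norm (y m - y n)"
    for m n
  proof -
    have "x m - x n \<in> D" using x csubspace_diff[OF csubspace_D] by blast
    moreover have "y m - y n = A (x m - x n) + scaleC \<i> (x m - x n)"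
      using x by (simp add: y A_diff scaleC_diff_right algebra_simps)
    ultimately have "(norm (y m - y n))\<^sup>2 = (norm (A (x m) - A (x n)))\<^sup>2 + (norm (x m - x n))\<^sup>2"
      using norm_A_plus_i_square[of "x m - x n"] x by (simp add: A_diff)
    then have "(norm (x m - x n))\<^sup>2 \<le> (norm (y m - y n))\<^sup>2"
      "(norm (A (x m) - A (x n)))\<^sup>2 \<le> (norm (y m - y n))\<^sup>2"
      by simp_all
    then show ?thesis
      by (auto intro: power2_le_imp_le)
  qed
  have "Cauchy y" using yl LIMSEQ_imp_Cauchy by blast
  then have "Cauchy x" "Cauchy (\<lambda>n. A (x n))"
    unfolding Cauchy_iff using bound by (meson le_less_trans)+
  then obtain x0 h where x0: "x \<longlonglongrightarrow> x0" and h: "(\<lambda>n. A (x n)) \<longlonglongrightarrow> h"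
    using Cauchy_convergent_iff convergent_def by metis
  have "(x0, h) \<in> {(f, A f) | f. f \<in> D}"
  proof (rule closed_sequentially[of _ "\<lambda>n. (x n, A (x n))"])
    show "closed {(f, A f) | f. f \<in> D}" using closed_S by (simp add: closed_op_def)
  qed (use x in \<open>auto intro: tendsto_Pair x0 h\<close>)
  then have "x0 \<in> D" and "h = A x0" by auto
  have "y \<longlonglongrightarrow> h + scaleC \<i> x0"
    unfolding y by (intro tendsto_intros h x0)
  then have "l = A x0 + scaleC \<i> x0"
    using yl LIMSEQ_unique \<open>h = A x0\<close> by blast
  then show "l \<in> range_plus_i"
    using \<open>x0 \<in> D\<close> by (auto simp: range_plus_i_def)
qed

lemma N_plus_iff_orthogonal_range: "g \<in> N_plus \<longleftrightarrow> (\<forall>w\<in>range_plus_i. cinner w g = 0)"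
  unfolding defect_space_iff range_plus_i_def by (simp add: scaleC_minus_left)

lemma von_neumann_decomposition:
  assumes f: "f \<in> adj_dom S"
  shows "\<exists>f0 fp fm. f0 \<in> D \<and> fp \<in> N_plus \<and> fm \<in> N_minus \<and> f = f0 + fp + fm"
proof -
  \<comment> \<open>project \<open>(S\<^sup>* + i) f\<close> onto \<open>ran (S + i)\<close>; the orthogonal remainder lies in \<open>\<frak>N\<^sub>i\<close>\<close>
  define y where "y = adj_fun S f + scaleC \<i> f"
  obtain m where "m \<in> range_plus_i" and orth: "\<forall>w\<in>range_plus_i. cinner (y - m) w = 0"
    using orthogonal_projection_exists[OF csubspace_range_plus_i closed_range_plus_i] by blast
  then obtain f0 where f0: "f0 \<in> D" and m: "m = A f0 + scaleC \<i> f0"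
    by (auto simp: range_plus_i_def)
  have "y - m \<in> N_plus"
    using orth unfolding N_plus_iff_orthogonal_range by (metis cinner_commute complex_cnj_zero)
  define fp where "fp = scaleC (- \<i> / 2) (y - m)"
  have fp: "fp \<in> N_plus"
    unfolding fp_def using csubspace_scaleC[OF csubspace_defect_space \<open>y - m \<in> N_plus\<close>] .
  have "adj_fun S fp + scaleC \<i> fp = scaleC (\<i> + \<i>) fp"
    unfolding defect_space_adj(2)[OF fp] scaleC_add_left ..
  also have "\<dots> = scaleC ((\<i> + \<i>) * (- \<i> / 2)) (y - m)"
    unfolding fp_def scaleC_mult ..
  also have "(\<i> + \<i>) * (- \<i> / 2) = 1"
    by (simp add: field_simps)
  finally have fp_eq: "adj_fun S fp + scaleC \<i> fp = y - m"
    by (simp add: scaleC_one)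
  define fm where "fm = f - f0 - fp"
  have "fm \<in> adj_dom S" and "adj_fun S fm = adj_fun S f - A f0 - adj_fun S fp"
    using f adj_extends_S[OF f0] defect_space_adj(1)[OF fp] adj_diff
    unfolding fm_def by metis+
  moreover have "adj_fun S f - A f0 - adj_fun S fp + scaleC \<i> fm = 0"
  proof -
    have "adj_fun S f - A f0 - adj_fun S fp + scaleC \<i> fm
        = (adj_fun S f + scaleC \<i> f) - (A f0 + scaleC \<i> f0) - (adj_fun S fp + scaleC \<i> fp)"
      by (simp add: fm_def scaleC_diff_right scaleC_add_right algebra_simps)
    also have "\<dots> = 0"
      by (simp add: fp_eq y_def m)
    finally show ?thesis .
  qed
  ultimately have "fm \<in> N_minus"
    by (simp add: defect_space_def scaleC_minus_left eq_neg_iff_add_eq_0)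
  then show ?thesis
    using f0 fp by (intro exI[of _ f0] exI[of _ fp] exI[of _ fm]) (simp add: fm_def)
qed

lemma adj_von_neumann_sum:
  assumes "f0 \<in> D" "fp \<in> N_plus" "fm \<in> N_minus"
  shows "f0 + fp + fm \<in> adj_dom S"
    and "adj_fun S (f0 + fp + fm) = A f0 + scaleC \<i> fp - scaleC \<i> fm"
proof -
  have f: "f0 \<in> adj_dom S" "fp \<in> adj_dom S" "fm \<in> adj_dom S"
    using assms by (simp_all add: adj_extends_S(1) defect_space_adj(1))
  then show "f0 + fp + fm \<in> adj_dom S"
    by (intro adj_add(1))
  have "adj_fun S (f0 + fp + fm) = adj_fun S f0 + adj_fun S fp + adj_fun S fm"
    using f by (simp add: adj_add)
  then show "adj_fun S (f0 + fp + fm) = A f0 + scaleC \<i> fp - scaleC \<i> fm"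
    using assms by (simp add: adj_extends_S(2) defect_space_adj(2) scaleC_minus_left)
qed

lemma von_neumann_decomposition_zero:
  assumes f0: "f0 \<in> D" and fp: "fp \<in> N_plus" and fm: "fm \<in> N_minus" and sum: "f0 + fp + fm = 0"
  shows "f0 = 0" "fp = 0" "fm = 0"
proof -
  \<comment> \<open>apply \<open>S\<^sup>* + i\<close>: this kills \<open>fm\<close>, and \<open>(S + i) f0 \<perp> fp\<close> forces \<open>fp = 0\<close>\<close>
  have "(A f0 + scaleC \<i> f0) + (scaleC \<i> fp + scaleC \<i> fp)
      = adj_fun S (f0 + fp + fm) + scaleC \<i> (f0 + fp + fm)"
    unfolding adj_von_neumann_sum(2)[OF assms(1-3)] by (simp add: scaleC_add_right algebra_simps)
  also have "\<dots> = 0"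
    using sum adj_extends_S[OF csubspace_0[OF csubspace_D]] A_zero by simp
  finally have e: "(A f0 + scaleC \<i> f0) + (scaleC \<i> fp + scaleC \<i> fp) = 0" .
  have "cinner (A f0 + scaleC \<i> f0) fp = 0"
    using fp f0 by (auto simp: N_plus_iff_orthogonal_range range_plus_i_def)
  with arg_cong[where f="\<lambda>v. cinner v fp", OF e] have "(\<i> + \<i>) * cinner fp fp = 0"
    by (simp add: cinner_add_left cinner_scaleC_left distrib_right)
  then show fp0: "fp = 0" by simp
  then have "A f0 + scaleC \<i> f0 = 0"
    using e by simp
  then have "(norm (A f0))\<^sup>2 + (norm f0)\<^sup>2 = 0"
    using norm_A_plus_i_square[OF f0] by simp
  then show f00: "f0 = 0"
    by (metis add_nonneg_eq_0_iff norm_eq_zero zero_le_power2 power_eq_0_iff)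
  show "fm = 0" using sum fp0 f00 by simp
qed

lemma von_neumann_decomposition_unique:
  assumes "f0 \<in> D" "fp \<in> N_plus" "fm \<in> N_minus" "g0 \<in> D" "gp \<in> N_plus" "gm \<in> N_minus"
    and "f0 + fp + fm = g0 + gp + gm"
  shows "f0 = g0" "fp = gp" "fm = gm"
proof -
  have "f0 - g0 \<in> D" "fp - gp \<in> N_plus" "fm - gm \<in> N_minus"
    using assms csubspace_diff[OF csubspace_D] csubspace_diff[OF csubspace_defect_space] by auto
  moreover have "(f0 - g0) + (fp - gp) + (fm - gm) = 0"
    using assms(7) by (simp add: algebra_simps)
  ultimately have "f0 - g0 = 0" "fp - gp = 0" "fm - gm = 0"
    by (rule von_neumann_decomposition_zero)+
  then show "f0 = g0" "fp = gp" "fm = gm"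
    by simp_all
qed

definition vn_parts :: "'a \<Rightarrow> 'a \<times> 'a \<times> 'a" where
  "vn_parts f = (SOME (f0, fp, fm). f0 \<in> D \<and> fp \<in> N_plus \<and> fm \<in> N_minus \<and> f = f0 + fp + fm)"

lemma vn_parts_eq:
  assumes "f0 \<in> D" "fp \<in> N_plus" "fm \<in> N_minus"
  shows "vn_parts (f0 + fp + fm) = (f0, fp, fm)"
proof -
  have "\<exists>p. case p of (g0, gp, gm) \<Rightarrow> g0 \<in> D \<and> gp \<in> N_plus \<and> gm \<in> N_minus \<and> f0 + fp + fm = g0 + gp + gm"
    using assms by auto
  then have "case vn_parts (f0 + fp + fm) of (g0, gp, gm) \<Rightarrow>
      g0 \<in> D \<and> gp \<in> N_plus \<and> gm \<in> N_minus \<and> f0 + fp + fm = g0 + gp + gm"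
    unfolding vn_parts_def by (rule someI_ex)
  then show ?thesis
    using von_neumann_decomposition_unique[OF assms] by (auto split: prod.splits)
qed

lemma vn_partsE:
  assumes "f \<in> adj_dom S"
  obtains f0 fp fm where "f0 \<in> D" "fp \<in> N_plus" "fm \<in> N_minus" "f = f0 + fp + fm"
    "vn_parts f = (f0, fp, fm)"
  using von_neumann_decomposition[OF assms] vn_parts_eq by blast

lemma adj_green_identity:
  assumes "f0 \<in> D" "fp \<in> N_plus" "fm \<in> N_minus" "g0 \<in> D" "gp \<in> N_plus" "gm \<in> N_minus"
  shows "cinner (adj_fun S (f0 + fp + fm)) (g0 + gp + gm) - cinner (f0 + fp + fm) (adj_fun S (g0 + gp + gm))
    = 2 * \<i> * (cinner fp gp - cinner fm gm)"
proof -
  have "cinner (A f0) gp = cinner f0 (scaleC \<i> gp)" "cinner (A f0) gm = cinner f0 (scaleC (- \<i>) gm)"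
    "cinner fp (A g0) = cinner (scaleC \<i> fp) g0" "cinner fm (A g0) = cinner (scaleC (- \<i>) fm) g0"
    using assms by (simp_all add: adj_cinner adj_cinner' defect_space_adj)
  then show ?thesis
    unfolding adj_von_neumann_sum(2)[OF assms(1-3)] adj_von_neumann_sum(2)[OF assms(4-6)]
    using A_symmetric[OF assms(1,4)]
    by (simp add: cinner_simps algebra_simps)
qed

lemma vn_parts_components:
  assumes "f \<in> adj_dom S" "vn_parts f = (f0, fp, fm)"
  shows "f0 \<in> D" "fp \<in> N_plus" "fm \<in> N_minus" "f = f0 + fp + fm"
  using vn_partsE[OF assms(1)] assms(2) by (metis prod.inject)+

lemma vn_parts_add:
  assumes "f \<in> adj_dom S" "g \<in> adj_dom S" "vn_parts f = (f0, fp, fm)" "vn_parts g = (g0, gp, gm)"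
  shows "vn_parts (f + g) = (f0 + g0, fp + gp, fm + gm)"
proof -
  note f = vn_parts_components[OF assms(1,3)] and g = vn_parts_components[OF assms(2,4)]
  have "f + g = (f0 + g0) + (fp + gp) + (fm + gm)"
    using f(4) g(4) by (simp add: algebra_simps)
  moreover have "vn_parts ((f0 + g0) + (fp + gp) + (fm + gm)) = (f0 + g0, fp + gp, fm + gm)"
    using f g by (intro vn_parts_eq csubspace_add[OF csubspace_D] csubspace_add[OF csubspace_defect_space])
  ultimately show ?thesis by simp
qed

lemma vn_parts_scaleC:
  assumes "f \<in> adj_dom S" "vn_parts f = (f0, fp, fm)"
  shows "vn_parts (scaleC a f) = (scaleC a f0, scaleC a fp, scaleC a fm)"
proof -
  note f = vn_parts_components[OF assms]
  have "scaleC a f = scaleC a f0 + scaleC a fp + scaleC a fm"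
    using f(4) by (simp add: scaleC_add_right)
  moreover have "vn_parts (scaleC a f0 + scaleC a fp + scaleC a fm) = (scaleC a f0, scaleC a fp, scaleC a fm)"
    using f by (intro vn_parts_eq csubspace_scaleC[OF csubspace_D] csubspace_scaleC[OF csubspace_defect_space])
  ultimately show ?thesis by simp
qed

section \<open>The boundary triplet of von Neumann's decomposition\<close>

text \<open>The factor \<open>\<surd>2\<close> absorbs the factor \<open>2\<close> of the Green identity \<open>adj_green_identity\<close>.\<close>

definition boundary_plus :: "'a \<Rightarrow> 'a" where
  "boundary_plus f = (case vn_parts f of (_, fp, _) \<Rightarrow> scaleC (complex_of_real (sqrt 2)) fp)"

definition boundary_minus :: "('a \<Rightarrow> 'a) \<Rightarrow> 'a \<Rightarrow> 'a" where
  "boundary_minus U f = (case vn_parts f of (_, _, fm) \<Rightarrow> scaleC (complex_of_real (sqrt 2)) (U fm))"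

lemma boundary_plus_vn: "vn_parts f = (f0, fp, fm) \<Longrightarrow> boundary_plus f = scaleC (complex_of_real (sqrt 2)) fp"
  by (simp add: boundary_plus_def)

lemma boundary_minus_vn:
  "vn_parts f = (f0, fp, fm) \<Longrightarrow> boundary_minus U f = scaleC (complex_of_real (sqrt 2)) (U fm)"
  by (simp add: boundary_minus_def)

lemma boundary_maps_in_N_plus:
  assumes "U ` N_minus = N_plus" "f \<in> adj_dom S"
  shows "boundary_minus U f \<in> N_plus" "boundary_plus f \<in> N_plus"
proof -
  obtain f0 fp fm where p: "vn_parts f = (f0, fp, fm)" by (metis prod_cases3)
  note parts = vn_parts_components[OF assms(2) p]
  have "U fm \<in> N_plus" using assms(1) parts(3) by blast
  then show "boundary_minus U f \<in> N_plus" "boundary_plus f \<in> N_plus"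
    using parts(2) by (simp_all add: boundary_plus_vn[OF p] boundary_minus_vn[OF p]
        csubspace_scaleC[OF csubspace_defect_space])
qed

lemma boundary_maps_add:
  assumes pres: "cinner_preserving_on N_minus U" and "f \<in> adj_dom S" "g \<in> adj_dom S"
  shows "boundary_minus U (f + g) = boundary_minus U f + boundary_minus U g"
    "boundary_plus (f + g) = boundary_plus f + boundary_plus g"
proof -
  obtain f0 fp fm where p: "vn_parts f = (f0, fp, fm)" by (metis prod_cases3)
  obtain g0 gp gm where q: "vn_parts g = (g0, gp, gm)" by (metis prod_cases3)
  have "U (fm + gm) = U fm + U gm"
    using csubspace_defect_space pres vn_parts_components(3)[OF assms(2) p]
      vn_parts_components(3)[OF assms(3) q] by (rule cinner_preserving_on_add)
  then show "boundary_minus U (f + g) = boundary_minus U f + boundary_minus U g"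
    "boundary_plus (f + g) = boundary_plus f + boundary_plus g"
    using vn_parts_add[OF assms(2,3) p q]
    by (simp_all add: boundary_plus_vn boundary_minus_vn p q scaleC_add_right)
qed

lemma boundary_maps_scaleC:
  assumes pres: "cinner_preserving_on N_minus U" and "f \<in> adj_dom S"
  shows "boundary_minus U (scaleC a f) = scaleC a (boundary_minus U f)"
    "boundary_plus (scaleC a f) = scaleC a (boundary_plus f)"
proof -
  obtain f0 fp fm where p: "vn_parts f = (f0, fp, fm)" by (metis prod_cases3)
  have "U (scaleC a fm) = scaleC a (U fm)"
    using csubspace_defect_space pres vn_parts_components(3)[OF assms(2) p]
    by (rule cinner_preserving_on_scaleC)
  then show "boundary_minus U (scaleC a f) = scaleC a (boundary_minus U f)"
    "boundary_plus (scaleC a f) = scaleC a (boundary_plus f)"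
    using vn_parts_scaleC[OF assms(2) p]
    by (simp_all add: boundary_plus_vn boundary_minus_vn p mult.commute flip: scaleC_mult)
qed

lemma boundary_green_identity:
  assumes pres: "cinner_preserving_on N_minus U" and "f \<in> adj_dom S" "g \<in> adj_dom S"
  shows "cinner (adj_fun S f) g - cinner f (adj_fun S g)
    = \<i> * (cinner (boundary_plus f) (boundary_plus g) - cinner (boundary_minus U f) (boundary_minus U g))"
proof -
  obtain f0 fp fm where p: "vn_parts f = (f0, fp, fm)" by (metis prod_cases3)
  obtain g0 gp gm where q: "vn_parts g = (g0, gp, gm)" by (metis prod_cases3)
  note f = vn_parts_components[OF assms(2) p] and g = vn_parts_components[OF assms(3) q]
  have "cinner (adj_fun S f) g - cinner f (adj_fun S g) = 2 * \<i> * (cinner fp gp - cinner fm gm)"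
    unfolding f(4) g(4) by (rule adj_green_identity[OF f(1-3) g(1-3)])
  then show ?thesis
    using f(3) g(3) by (simp add: boundary_plus_vn[OF p] boundary_plus_vn[OF q]
        boundary_minus_vn[OF p] boundary_minus_vn[OF q] cinner_scaleC_sqrt2
        cinner_preserving_onD[OF pres] algebra_simps)
qed

lemma boundary_maps_surjective:
  assumes pres: "cinner_preserving_on N_minus U" and onto: "U ` N_minus = N_plus"
    and "h1 \<in> N_plus" "h2 \<in> N_plus"
  shows "\<exists>f\<in>adj_dom S. boundary_minus U f = h1 \<and> boundary_plus f = h2"
proof -
  define r where "r = complex_of_real (sqrt 2)"
  have "h1 \<in> U ` N_minus" using onto assms(3) by simp
  then obtain x where "x \<in> N_minus" "U x = h1" by (rule imageE) simp
  define f where "f = 0 + scaleC (1 / r) h2 + scaleC (1 / r) x"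
  have parts: "0 \<in> D" "scaleC (1 / r) h2 \<in> N_plus" "scaleC (1 / r) x \<in> N_minus"
    using csubspace_0[OF csubspace_D] csubspace_scaleC[OF csubspace_defect_space]
      \<open>h2 \<in> N_plus\<close> \<open>x \<in> N_minus\<close> by auto
  have "f \<in> adj_dom S"
    unfolding f_def by (rule adj_von_neumann_sum(1)[OF parts])
  moreover have "U (scaleC (1 / r) x) = scaleC (1 / r) h1"
    using csubspace_defect_space pres \<open>x \<in> N_minus\<close> \<open>U x = h1\<close>
    by (metis cinner_preserving_on_scaleC)
  then have "boundary_minus U f = h1" "boundary_plus f = h2"
    using vn_parts_eq[OF parts, folded f_def]
    by (simp_all add: boundary_plus_vn boundary_minus_vn scaleC_one r_def flip: scaleC_mult)
  ultimately show ?thesis by blast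
qed

lemma boundary_triplet_von_neumann:
  assumes "cinner_preserving_on N_minus U" and "U ` N_minus = N_plus"
  shows "boundary_triplet S N_plus (boundary_minus U) boundary_plus"
  unfolding boundary_triplet_def
  by (simp add: boundary_maps_in_N_plus[OF assms(2)] boundary_maps_add[OF assms(1)]
      boundary_maps_scaleC[OF assms(1)] boundary_green_identity[OF assms(1)]
      boundary_maps_surjective[OF assms] csubspace_defect_space closed_defect_space)

lemma dom_plus_defect_i_eq:
  assumes "cinner_preserving_on N_minus U"
  shows "dom_plus_defect S \<i> = {f \<in> adj_dom S. boundary_minus U f = 0}"
proof (intro set_eqI iffI)
  fix f assume "f \<in> dom_plus_defect S \<i>"
  then obtain f0 fp where parts: "f0 \<in> D" "fp \<in> N_plus" "0 \<in> N_minus" and f: "f = f0 + fp + 0"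
    by (auto simp: dom_plus_defect_def csubspace_0[OF csubspace_defect_space])
  moreover have "U 0 = 0"
    using cinner_preserving_on_norm[OF assms csubspace_0[OF csubspace_defect_space]] by simp
  ultimately show "f \<in> {f \<in> adj_dom S. boundary_minus U f = 0}"
    using adj_von_neumann_sum(1)[OF parts] vn_parts_eq[OF parts]
    by (simp only: boundary_minus_def f) simp
next
  fix f assume "f \<in> {f \<in> adj_dom S. boundary_minus U f = 0}"
  then have f: "f \<in> adj_dom S" and "boundary_minus U f = 0" by auto
  obtain f0 fp fm where p: "vn_parts f = (f0, fp, fm)" by (metis prod_cases3)
  note parts = vn_parts_components[OF f p]
  have "scaleC (complex_of_real (sqrt 2)) (U fm) = 0"
    using \<open>boundary_minus U f = 0\<close> p by (simp add: boundary_minus_def)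
  from arg_cong[where f=norm, OF this] have "fm = 0"
    using cinner_preserving_on_norm[OF assms parts(3)] by (simp add: norm_scaleC)
  then show "f \<in> dom_plus_defect S \<i>"
    using parts by (auto simp: dom_plus_defect_def)
qed

end

lemma bounded_op_on_zero: "csubspace Hb \<Longrightarrow> bounded_op_on Hb (\<lambda>_. 0)"
  by (auto simp: bounded_op_on_def csubspace_0 intro: exI[of _ 0])

theorem theorem3p1:
  fixes S :: "'a::chilbert op"
  assumes "separable_space TYPE('a)"
    and "linear_op S" and "closed_op S" and "densely_defined S" and "symmetric_op S"
    and "equal_nonzero_defect_numbers S"
  shows "phillips_symmetric S \<longleftrightarrow>
    (\<forall>l m. Im l > 0 \<longrightarrow> Im m > 0 \<longrightarrow> defect_space S l \<subseteq> dom_plus_defect S m)"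
proof -
  interpret closed_symmetric_operator S
    using assms(2-5) by unfold_locales
  show ?thesis
  proof
    assume "phillips_symmetric S"
    then obtain Hb Gm Gp \<Theta> where \<Theta>: "\<forall>l. Im l > 0 \<longrightarrow> is_char_fun_value S Hb Gm Gp l \<Theta>"
      by (auto simp: phillips_symmetric_def)
    show "\<forall>l m. Im l > 0 \<longrightarrow> Im m > 0 \<longrightarrow> defect_space S l \<subseteq> dom_plus_defect S m"
      using \<Theta> defect_space_subset_dom_plus_defect by (auto simp: is_char_fun_value_def)
  next
    assume H: "\<forall>l m. Im l > 0 \<longrightarrow> Im m > 0 \<longrightarrow> defect_space S l \<subseteq> dom_plus_defect S m"
    have "same_hilbert_dim N_minus N_plus"
      using assms(6) by (simp add: equal_nonzero_defect_numbers_def same_hilbert_dim_sym)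
    then obtain U where pres: "cinner_preserving_on N_minus U" and onto: "U ` N_minus = N_plus"
      using same_hilbert_dim_unitary by blast
    have "is_char_fun_value S N_plus (boundary_minus U) boundary_plus l (\<lambda>_. 0)" if "Im l > 0" for l
    proof -
      have "dom_plus_defect S l = dom_plus_defect S \<i>"
        using H that dom_plus_defect_subset by (intro equalityI) auto
      then show ?thesis
        using dom_plus_defect_i_eq[OF pres] bounded_op_on_zero[OF csubspace_defect_space]
        by (auto simp: is_char_fun_value_def)
    qed
    then show "phillips_symmetric S"
      unfolding phillips_symmetric_def
      using assms(2-6) boundary_triplet_von_neumann[OF pres onto] by blast
  qed
qed

end
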